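(* Let $G$ be a locally compact group, $K$ a compact subgroup with normalized Haar measure $dk$, $\delta>0$, and $\mu:G\to\mathbb{C}$ a continuous unitary character. Let $f,g\in\mathcal{C}(G)$ with $f$ unbounded satisfy $$\Big|\int_K f(xkyk^{-1})\,dk+\mu(y)\int_K f(xky^{-1}k^{-1})\,dk-2f(x)g(y)\Big|\le\delta\quad\text{for all }x,y\in G. \qquad (5.1)$$ Then: (i) for every $x\in G$, the pair $(C_K(L_{x^{-1}}f),g)$ satisfies (5.1), where $C_K(L_{x^{-1}}f)(y)=\int_Kf(xkyk^{-1})\,dk$; (ii) $g(y)=\mu(y)g(y^{-1})$ for all $y\in G$; (iii) $g$ is $K$-central.
   Context: A unitary character is a continuous homomorphism $\mu:G\to\{z\in\mathbb{C}:|z|=1\}$. $(L_af)(y)=f(a^{-1}y)$, $(C_Kf)(x)=\int_Kf(kxk^{-1})\,dk$. A function $g$ is $K$-central if $g(kx)=g(xk)$ for all $k\in K,x\in G$. *)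

theory Defs
  imports "HOL-Analysis.Analysis" "HOL-Probability.Probability" "HOL-Algebra.Group"
begin

definition lc_group :: "('a::t2_space, 'b) monoid_scheme \<Rightarrow> bool" where
  "lc_group G \<longleftrightarrow> group G
     \<and> continuous_on (carrier G \<times> carrier G) (\<lambda>p. fst p \<otimes>\<^bsub>G\<^esub> snd p)
     \<and> continuous_on (carrier G) (\<lambda>x. inv\<^bsub>G\<^esub> x)
     \<and> locally_compact_space (top_of_set (carrier G))"

definition normalized_haar :: "('a::t2_space, 'b) monoid_scheme \<Rightarrow> 'a set \<Rightarrow> 'a measure \<Rightarrow> bool" where
  "normalized_haar G K M \<longleftrightarrow>
     sets M = sets (restrict_space borel K) \<and> space M = K \<and> prob_space M
     \<and> (\<forall>h\<in>K. distr M M (\<lambda>k. h \<otimes>\<^bsub>G\<^esub> k) = M \<and> distr M M (\<lambda>k. k \<otimes>\<^bsub>G\<^esub> h) = M)"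

definition unitary_character :: "('a::topological_space, 'b) monoid_scheme \<Rightarrow> ('a \<Rightarrow> complex) \<Rightarrow> bool" where
  "unitary_character G \<mu> \<longleftrightarrow> continuous_on (carrier G) \<mu>
     \<and> (\<forall>x\<in>carrier G. \<forall>y\<in>carrier G. \<mu> (x \<otimes>\<^bsub>G\<^esub> y) = \<mu> x * \<mu> y)
     \<and> (\<forall>x\<in>carrier G. cmod (\<mu> x) = 1)"

definition satisfies_5_1 ::
  "('a, 'b) monoid_scheme \<Rightarrow> 'a measure \<Rightarrow> ('a \<Rightarrow> complex) \<Rightarrow> real \<Rightarrow> ('a \<Rightarrow> complex) \<Rightarrow> ('a \<Rightarrow> complex) \<Rightarrow> bool" where
  "satisfies_5_1 G M \<mu> \<delta> f g \<longleftrightarrow>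
     (\<forall>x\<in>carrier G. \<forall>y\<in>carrier G.
        cmod ((\<integral>k. f (x \<otimes>\<^bsub>G\<^esub> k \<otimes>\<^bsub>G\<^esub> y \<otimes>\<^bsub>G\<^esub> inv\<^bsub>G\<^esub> k) \<partial>M)
            + \<mu> y * (\<integral>k. f (x \<otimes>\<^bsub>G\<^esub> k \<otimes>\<^bsub>G\<^esub> inv\<^bsub>G\<^esub> y \<otimes>\<^bsub>G\<^esub> inv\<^bsub>G\<^esub> k) \<partial>M)
            - 2 * f x * g y) \<le> \<delta>)"

definition K_central :: "('a, 'b) monoid_scheme \<Rightarrow> 'a set \<Rightarrow> ('a \<Rightarrow> 'c) \<Rightarrow> bool" where
  "K_central G K g \<longleftrightarrow> (\<forall>k\<in>K. \<forall>x\<in>carrier G. g (k \<otimes>\<^bsub>G\<^esub> x) = g (x \<otimes>\<^bsub>G\<^esub> k))"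

end

theory Submission
  imports Defs
begin

text \<open>For (i), average (5.1) at the points \<open>x k z k\<inverse>\<close> over \<open>k \<in> K\<close>: by Fubini and the
  invariance of \<open>dk\<close>, the averaged integral terms are exactly those of (5.1) for
  \<open>C\<^sub>K(L\<^bsub>x\<inverse>\<^esub>f)\<close>, and the average of numbers of modulus \<open>\<le> \<delta>\<close> has modulus \<open>\<le> \<delta>\<close>.
  For (ii) and (iii), replacing \<open>y\<close> by \<open>y\<inverse>\<close> (and multiplying by \<open>\<mu>(y)\<close>), or by a conjugate
  \<open>k y k\<inverse>\<close> with \<open>k \<in> K\<close>, leaves the integral terms of (5.1) unchanged; subtracting the two
  instances bounds \<open>|f(x)| |2g(y) - 2g(y')|\<close> by \<open>2\<delta>\<close> for all \<open>x\<close>, and as \<open>f\<close> is unbounded,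
  \<open>g(y) = g(y')\<close>.\<close>

lemma compact_uniform_slice_cover:
  fixes \<Phi> :: "'a::topological_space \<times> 'b::topological_space \<Rightarrow> 'c::metric_space"
  assumes "compact A" "compact B" "continuous_on (A \<times> B) \<Phi>" "e > 0"
  shows "\<exists>(m::nat) X c. (\<forall>j<m. open (X j) \<and> c j \<in> A) \<and> A \<subseteq> (\<Union>j<m. X j) \<and>
           (\<forall>j<m. \<forall>k\<in>A \<inter> X j. \<forall>h\<in>B. dist (\<Phi> (k, h)) (\<Phi> (c j, h)) \<le> e)"
proof -
  have "\<forall>k0\<in>A. \<exists>U. k0 \<in> U \<and> open U \<and> (\<forall>k\<in>U \<inter> A. \<forall>h\<in>B. dist (\<Phi> (k, h)) (\<Phi> (k0, h)) \<le> e)"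
    using continuous_on_prod_compactE[OF assms(3,2) _ assms(4)] by metis
  then obtain U where U: "\<And>k0. k0 \<in> A \<Longrightarrow> k0 \<in> U k0 \<and> open (U k0) \<and>
      (\<forall>k\<in>U k0 \<inter> A. \<forall>h\<in>B. dist (\<Phi> (k, h)) (\<Phi> (k0, h)) \<le> e)"
    by metis
  obtain C where C: "C \<subseteq> A" "finite C" "A \<subseteq> (\<Union>k\<in>C. U k)"
    using compactE_image[OF assms(1), of A U] U by blast
  obtain m :: nat and c where mc: "C = c ` {..<m}"
    using finite_imp_nat_seg_image_inj_on[OF C(2)] lessThan_def by metis
  have "\<forall>j<m. open (U (c j)) \<and> c j \<in> A" "A \<subseteq> (\<Union>j<m. U (c j))"
    "\<forall>j<m. \<forall>k\<in>A \<inter> U (c j). \<forall>h\<in>B. dist (\<Phi> (k, h)) (\<Phi> (c j, h)) \<le> e"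
    using U C mc by auto
  then show ?thesis
    by (intro exI[where x=m] exI[where x="U \<circ> c"] exI[where x=c]) simp
qed

lemma borel_measurable_select_open_cover:
  fixes F :: "nat \<Rightarrow> 'b \<Rightarrow> 'c::topological_space"
  assumes "\<And>j. j < m \<Longrightarrow> open (X j)" "A \<subseteq> (\<Union>j<m. X j)"
    and "\<And>j. j < m \<Longrightarrow> F j \<in> borel_measurable N"
  shows "(\<lambda>p. F (LEAST j. j < m \<and> fst p \<in> X j) (snd p)) \<in> borel_measurable (restrict_space borel A \<Otimes>\<^sub>M N)"
proof -
  let ?A = "restrict_space borel A"
  define idx where "idx k = (LEAST j. j < m \<and> k \<in> X j)" for k
  define F' where "F' j p = (if j < m then F j (snd p) else undefined)" for j and p :: "'a \<times> 'b"
  have idx: "idx k < m" if k: "k \<in> A" for k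
  proof -
    obtain j where "j < m \<and> k \<in> X j" using assms(2) k by blast
    then have "idx k < m \<and> k \<in> X (idx k)" unfolding idx_def by (rule LeastI)
    then show ?thesis ..
  qed
  have "(\<lambda>k. j < m \<and> k \<in> X j) \<in> measurable ?A (count_space UNIV)" for j
  proof (cases "j < m")
    case True
    then have "X j \<in> sets borel" using assms(1) by auto
    then show ?thesis
      using True by (simp add: pred_sets2[OF _ measurable_restrict_space1[OF measurable_id]])
  qed simp
  then have idx_measurable: "idx \<in> measurable ?A (count_space UNIV)"
    unfolding idx_def by (rule measurable_Least)
  have "(\<lambda>p. F' (idx (fst p)) p) \<in> borel_measurable (?A \<Otimes>\<^sub>M N)"
  proof (rule measurable_compose_countable[where f=F'])
    show "(\<lambda>p. idx (fst p)) \<in> measurable (?A \<Otimes>\<^sub>M N) (count_space UNIV)"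
      by (rule measurable_compose[OF measurable_fst idx_measurable])
    show "F' j \<in> borel_measurable (?A \<Otimes>\<^sub>M N)" for j
      unfolding F'_def using measurable_compose[OF measurable_snd assms(3)] by (cases "j < m") auto
  qed
  moreover have "F' (idx (fst p)) p = F (idx (fst p)) (snd p)" if "p \<in> space (?A \<Otimes>\<^sub>M N)" for p
    using that idx by (auto simp: F'_def space_pair_measure space_restrict_space)
  ultimately show ?thesis
    unfolding idx_def[symmetric] by (rule measurable_cong[THEN iffD1, rotated])
qed

text \<open>Without second countability the Borel sets of a product need not be generated by
  rectangles; on compact sets, continuity makes \<open>\<Phi>\<close> a pointwise limit of functions
  \<open>(k, h) \<mapsto> \<Phi> (c\<^sub>j, h)\<close> with \<open>j\<close> a measurable function of \<open>k\<close>.\<close>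
lemma borel_measurable_continuous_on_compact_Times:
  fixes \<Phi> :: "'a::topological_space \<times> 'b::topological_space \<Rightarrow> 'c::metric_space"
  assumes sets_M: "sets M = sets (restrict_space borel A)"
    and sets_N: "sets N = sets (restrict_space borel B)"
    and "compact A" "compact B" and cont: "continuous_on (A \<times> B) \<Phi>"
  shows "\<Phi> \<in> borel_measurable (M \<Otimes>\<^sub>M N)"
proof -
  have "\<forall>n. \<exists>(m::nat) X c. (\<forall>j<m. open (X j) \<and> c j \<in> A) \<and> A \<subseteq> (\<Union>j<m. X j) \<and>
      (\<forall>j<m. \<forall>k\<in>A \<inter> X j. \<forall>h\<in>B. dist (\<Phi> (k, h)) (\<Phi> (c j, h)) \<le> 1 / Suc n)"
    by (intro allI compact_uniform_slice_cover[OF assms(3-5)]) simp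
  then obtain m :: "nat \<Rightarrow> nat" and X c where cover:
    "\<And>n. (\<forall>j<m n. open (X n j) \<and> c n j \<in> A) \<and> A \<subseteq> (\<Union>j<m n. X n j) \<and>
      (\<forall>j<m n. \<forall>k\<in>A \<inter> X n j. \<forall>h\<in>B. dist (\<Phi> (k, h)) (\<Phi> (c n j, h)) \<le> 1 / Suc n)"
    by metis
  define idx where "idx n k = (LEAST j. j < m n \<and> k \<in> X n j)" for n k
  have idx: "idx n k < m n \<and> k \<in> X n (idx n k)" if k: "k \<in> A" for n k
  proof -
    obtain j where "j < m n \<and> k \<in> X n j" using cover[of n] k by blast
    then show ?thesis unfolding idx_def by (rule LeastI)
  qed
  let ?A = "restrict_space borel A" and ?B = "restrict_space borel B"
  have "(\<lambda>p. \<Phi> (c n (idx n (fst p)), snd p)) \<in> borel_measurable (?A \<Otimes>\<^sub>M ?B)" for n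
    unfolding idx_def
  proof (rule borel_measurable_select_open_cover)
    show "(\<lambda>h. \<Phi> (c n j, h)) \<in> borel_measurable ?B" if "j < m n" for j
      using that cover[of n]
      by (intro borel_measurable_continuous_on_restrict continuous_on_compose2[OF cont])
         (auto intro!: continuous_intros)
  qed (use cover[of n] in simp_all)
  then have "\<Phi> \<in> borel_measurable (?A \<Otimes>\<^sub>M ?B)"
  proof (rule borel_measurable_LIMSEQ_metric)
    fix p assume "p \<in> space (?A \<Otimes>\<^sub>M ?B)"
    then obtain k h where p: "p = (k, h)" "k \<in> A" "h \<in> B"
      by (auto simp: space_pair_measure space_restrict_space)
    have "dist (\<Phi> (c n (idx n (fst p)), snd p)) (\<Phi> p) \<le> inverse (Suc n)" for n
      using cover[of n] idx[OF p(2), of n] p(2,3) unfolding p(1)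
      by (simp add: dist_commute inverse_eq_divide)
    then have "(\<lambda>n. dist (\<Phi> (c n (idx n (fst p)), snd p)) (\<Phi> p)) \<longlonglongrightarrow> 0"
      by (intro Lim_null_comparison[OF _ LIMSEQ_inverse_real_of_nat] always_eventually) simp
    then show "(\<lambda>n. \<Phi> (c n (idx n (fst p)), snd p)) \<longlonglongrightarrow> \<Phi> p"
      by (rule tendsto_dist_iff[THEN iffD2])
  qed
  then show ?thesis
    by (subst measurable_cong_sets[OF sets_pair_measure_cong[OF sets_M sets_N] refl])
qed

lemma integrable_continuous_on_compact:
  fixes \<phi> :: "'a::topological_space \<Rightarrow> 'b::{banach, second_countable_topology}"
  assumes "finite_measure M" "\<phi> \<in> borel_measurable M"
    and "compact S" "space M \<subseteq> S" "continuous_on S \<phi>"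
  shows "integrable M \<phi>"
proof -
  obtain B where "\<forall>z\<in>\<phi> ` S. norm z \<le> B"
    using compact_continuous_image[OF assms(5,3)] by (meson compact_imp_bounded bounded_iff)
  then have "AE x in M. norm (\<phi> x) \<le> B"
    using assms(4) by (intro AE_I2) auto
  then show ?thesis
    using assms(2) by (rule finite_measure.integrable_const_bound[OF assms(1)])
qed

lemma space_eq_restrict_borel:
  assumes "sets M = sets (restrict_space borel A)"
  shows "space M = A"
  using sets_eq_imp_space_eq[OF assms] by (simp add: space_restrict_space)

lemma borel_measurable_continuous_on_restrict_borel:
  assumes "sets M = sets (restrict_space borel A)" "continuous_on A \<phi>"
  shows "\<phi> \<in> borel_measurable M"
  by (subst measurable_cong_sets[OF assms(1) refl])
     (rule borel_measurable_continuous_on_restrict[OF assms(2)])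

lemma integral_swap_continuous_on_compact_Times:
  fixes \<Phi> :: "'a::topological_space \<times> 'b::topological_space \<Rightarrow> 'c::{banach, second_countable_topology}"
  assumes M: "finite_measure M" "sets M = sets (restrict_space borel A)" "compact A"
    and N: "finite_measure N" "sets N = sets (restrict_space borel B)" "compact B"
    and cont: "continuous_on (A \<times> B) \<Phi>"
  shows "(\<integral>y. (\<integral>x. \<Phi> (x, y) \<partial>M) \<partial>N) = (\<integral>x. (\<integral>y. \<Phi> (x, y) \<partial>N) \<partial>M)"
    and "integrable M (\<lambda>x. \<integral>y. \<Phi> (x, y) \<partial>N)"
proof -
  interpret pair_sigma_finite M N
    using M(1) N(1) by (simp add: pair_sigma_finite_def finite_measure_def)
  have "integrable (M \<Otimes>\<^sub>M N) \<Phi>"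
  proof (rule integrable_continuous_on_compact[OF _ _ compact_Times[OF M(3) N(3)] _ cont])
    show "finite_measure (M \<Otimes>\<^sub>M N)" by (rule finite_measure_pair_measure[OF N(1) M(1)])
    show "\<Phi> \<in> borel_measurable (M \<Otimes>\<^sub>M N)"
      by (rule borel_measurable_continuous_on_compact_Times[OF M(2) N(2) M(3) N(3) cont])
    show "space (M \<Otimes>\<^sub>M N) \<subseteq> A \<times> B"
      by (simp add: space_pair_measure space_eq_restrict_borel[OF M(2)] space_eq_restrict_borel[OF N(2)])
  qed
  then show "(\<integral>y. (\<integral>x. \<Phi> (x, y) \<partial>M) \<partial>N) = (\<integral>x. (\<integral>y. \<Phi> (x, y) \<partial>N) \<partial>M)"
    and "integrable M (\<lambda>x. \<integral>y. \<Phi> (x, y) \<partial>N)"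
    using Fubini_integral[of "\<lambda>x y. \<Phi> (x, y)"] integrable_fst' by simp_all
qed

lemma (in prob_space) norm_integral_le_const:
  fixes f :: "'a \<Rightarrow> 'b::{banach, second_countable_topology}"
  assumes "integrable M f" "\<And>x. x \<in> space M \<Longrightarrow> norm (f x) \<le> c"
  shows "norm (\<integral>x. f x \<partial>M) \<le> c"
proof -
  have "norm (\<integral>x. f x \<partial>M) \<le> (\<integral>x. norm (f x) \<partial>M)"
    by (rule integral_norm_bound)
  also have "\<dots> \<le> c"
    using assms by (intro integral_le_const AE_I2) auto
  finally show ?thesis .
qed

lemma eq_if_unbounded_multiplier_close:
  fixes f :: "'a \<Rightarrow> 'b::real_normed_field"
  assumes "\<not> bounded (f ` S)"
    and "\<And>x. x \<in> S \<Longrightarrow> norm (a x - f x * c) \<le> \<delta>"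
    and "\<And>x. x \<in> S \<Longrightarrow> norm (a x - f x * d) \<le> \<delta>"
  shows "c = d"
proof (rule ccontr)
  assume "c \<noteq> d"
  have "norm (f x) \<le> 2 * \<delta> / norm (c - d)" if "x \<in> S" for x
  proof -
    have "norm (f x) * norm (c - d) = norm ((a x - f x * d) - (a x - f x * c))"
      by (simp add: norm_mult[symmetric] algebra_simps)
    also have "\<dots> \<le> 2 * \<delta>"
      using norm_triangle_ineq4 assms(2,3)[OF that] by (smt (verit))
    finally show ?thesis
      using \<open>c \<noteq> d\<close> by (simp add: field_simps)
  qed
  then have "bounded (f ` S)"
    unfolding bounded_iff by blast
  with assms(1) show False ..
qed

locale compact_subgroup_haar = group G for G :: "('a::t2_space, 'b) monoid_scheme" (structure) +
  fixes K :: "'a set" and M :: "'a measure"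
  assumes continuous_mult: "continuous_on (carrier G \<times> carrier G) (\<lambda>p. fst p \<otimes> snd p)"
    and continuous_inv: "continuous_on (carrier G) (\<lambda>x. inv x)"
    and subgroup_K: "subgroup K G" and compact_K: "compact K"
    and haar: "normalized_haar G K M"
begin

lemma K_carrier [simp]: "k \<in> K \<Longrightarrow> k \<in> carrier G"
  using subgroup.subset[OF subgroup_K] by blast

lemma sets_M: "sets M = sets (restrict_space borel K)"
  and space_M: "space M = K"
  and prob_space_M: "prob_space M"
  using haar unfolding normalized_haar_def by blast+

lemma finite_measure_M: "finite_measure M"
  using prob_space_M by (simp add: prob_space_def)

lemma continuous_on_mult_G:
  assumes "continuous_on S a" "continuous_on S b"
    and "\<And>s. s \<in> S \<Longrightarrow> a s \<in> carrier G" "\<And>s. s \<in> S \<Longrightarrow> b s \<in> carrier G"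
  shows "continuous_on S (\<lambda>s. a s \<otimes> b s)"
  using continuous_on_compose2[OF continuous_mult continuous_on_Pair[OF assms(1,2)]] assms(3,4)
  by auto

lemma continuous_on_inv_G:
  assumes "continuous_on S a" "\<And>s. s \<in> S \<Longrightarrow> a s \<in> carrier G"
  shows "continuous_on S (\<lambda>s. inv a s)"
  using continuous_on_compose2[OF continuous_inv assms(1)] assms(2) by auto

lemma integrable_M:
  fixes \<phi> :: "'a \<Rightarrow> 'c::{banach, second_countable_topology}"
  assumes "continuous_on K \<phi>"
  shows "integrable M \<phi>"
  by (rule integrable_continuous_on_compact[OF finite_measure_M _ compact_K _ assms])
     (simp_all add: space_M borel_measurable_continuous_on_restrict_borel[OF sets_M assms])

lemma measurable_M_M:
  assumes "continuous_on K t" "t ` K \<subseteq> K"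
  shows "t \<in> measurable M M"
proof -
  have "t \<in> measurable (restrict_space borel K) (restrict_space borel K)"
    using assms borel_measurable_continuous_on_restrict[OF assms(1)]
    by (intro measurable_restrict_space2) (auto simp: space_restrict_space)
  then show ?thesis
    by (simp add: measurable_cong_sets[OF sets_M sets_M])
qed

lemma integral_translate:
  fixes \<phi> :: "'a \<Rightarrow> 'c::{banach, second_countable_topology}"
  assumes "a \<in> K" "continuous_on K \<phi>"
  shows integral_translate_left: "(\<integral>k. \<phi> (a \<otimes> k) \<partial>M) = (\<integral>k. \<phi> k \<partial>M)"
    and integral_translate_right: "(\<integral>k. \<phi> (k \<otimes> a) \<partial>M) = (\<integral>k. \<phi> k \<partial>M)"
proof -
  have \<phi>: "\<phi> \<in> borel_measurable M"
    by (rule borel_measurable_continuous_on_restrict_borel[OF sets_M assms(2)])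
  have "t \<in> measurable M M" if "t = (\<lambda>k. a \<otimes> k) \<or> t = (\<lambda>k. k \<otimes> a)" for t
    using that assms(1) subgroup.m_closed[OF subgroup_K]
    by (intro measurable_M_M) (auto intro!: continuous_on_mult_G continuous_intros)
  then show "(\<integral>k. \<phi> (a \<otimes> k) \<partial>M) = (\<integral>k. \<phi> k \<partial>M)" "(\<integral>k. \<phi> (k \<otimes> a) \<partial>M) = (\<integral>k. \<phi> k \<partial>M)"
    using haar assms(1) integral_distr[OF _ \<phi>]
    unfolding normalized_haar_def by metis+
qed

lemma continuous_on_conj:
  assumes "continuous_on (carrier G) f" "x \<in> carrier G" "y \<in> carrier G"
  shows "continuous_on K (\<lambda>k. f (x \<otimes> k \<otimes> y \<otimes> inv k))"
  by (rule continuous_on_compose2[OF assms(1)])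
     (use assms(2,3) in \<open>auto intro!: continuous_on_mult_G continuous_on_inv_G continuous_intros\<close>)

definition conj_mean :: "('a \<Rightarrow> 'c::{banach, second_countable_topology}) \<Rightarrow> 'a \<Rightarrow> 'a \<Rightarrow> 'c" where
  "conj_mean f x y = (\<integral>k. f (x \<otimes> k \<otimes> y \<otimes> inv k) \<partial>M)"

lemma satisfies_5_1_iff:
  "satisfies_5_1 G M \<mu> \<delta> f g \<longleftrightarrow> (\<forall>x\<in>carrier G. \<forall>y\<in>carrier G.
     cmod (conj_mean f x y + \<mu> y * conj_mean f x (inv y) - 2 * f x * g y) \<le> \<delta>)"
  by (simp add: satisfies_5_1_def conj_mean_def)

lemma conj_mean_conj_invariant:
  fixes f :: "'a \<Rightarrow> 'c::{banach, second_countable_topology}"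
  assumes "continuous_on (carrier G) f" "x \<in> carrier G" "u \<in> carrier G" "k0 \<in> K"
  shows "conj_mean f x (k0 \<otimes> u \<otimes> inv k0) = conj_mean f x u"
proof -
  have "conj_mean f x (k0 \<otimes> u \<otimes> inv k0) = (\<integral>k. f (x \<otimes> (k \<otimes> k0) \<otimes> u \<otimes> inv (k \<otimes> k0)) \<partial>M)"
    unfolding conj_mean_def
    by (rule Bochner_Integration.integral_cong)
       (use assms(2-4) in \<open>auto simp: space_M m_assoc inv_mult_group\<close>)
  also have "\<dots> = conj_mean f x u"
    unfolding conj_mean_def by (rule integral_translate_right[OF assms(4) continuous_on_conj[OF assms(1-3)]])
  finally show ?thesis .
qed

text \<open>Fubini, followed by the substitution \<open>h \<mapsto> k\<inverse>h\<close> in the inner integral.\<close>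
lemma conj_mean_conj_mean:
  fixes f :: "'a \<Rightarrow> 'c::{banach, second_countable_topology}"
  assumes cont: "continuous_on (carrier G) f"
    and carrier: "x \<in> carrier G" "z \<in> carrier G" "u \<in> carrier G"
  shows "conj_mean (conj_mean f x) z u = (\<integral>k. conj_mean f (x \<otimes> k \<otimes> z \<otimes> inv k) u \<partial>M)"
    and "integrable M (\<lambda>k. conj_mean f (x \<otimes> k \<otimes> z \<otimes> inv k) u)"
proof -
  define \<Phi> where "\<Phi> p = f (x \<otimes> fst p \<otimes> (z \<otimes> snd p \<otimes> u \<otimes> inv snd p) \<otimes> inv fst p)" for p
  have "continuous_on (K \<times> K) \<Phi>"
    unfolding \<Phi>_def
    by (rule continuous_on_compose2[OF cont])
       (use carrier in \<open>auto intro!: continuous_on_mult_G continuous_on_inv_G continuous_intros\<close>)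
  note swap = integral_swap_continuous_on_compact_Times[OF finite_measure_M sets_M compact_K
      finite_measure_M sets_M compact_K this]
  have inner: "(\<integral>h. \<Phi> (k, h) \<partial>M) = conj_mean f (x \<otimes> k \<otimes> z \<otimes> inv k) u" if k: "k \<in> K" for k
  proof -
    have "(\<integral>h. \<Phi> (k, h) \<partial>M) = (\<integral>h. \<Phi> (k, inv k \<otimes> h) \<partial>M)"
      using k subgroup.m_inv_closed[OF subgroup_K k]
      by (intro integral_translate_left[symmetric] continuous_on_compose2[OF \<open>continuous_on (K \<times> K) \<Phi>\<close>])
         (auto intro!: continuous_intros)
    also have "\<dots> = conj_mean f (x \<otimes> k \<otimes> z \<otimes> inv k) u"
      unfolding conj_mean_def \<Phi>_def
      by (rule Bochner_Integration.integral_cong)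
         (use k carrier in \<open>auto simp: space_M m_assoc inv_mult_group\<close>)
    finally show ?thesis .
  qed
  have "conj_mean (conj_mean f x) z u = (\<integral>h. (\<integral>k. \<Phi> (k, h) \<partial>M) \<partial>M)"
    by (simp add: conj_mean_def \<Phi>_def)
  also have "\<dots> = (\<integral>k. (\<integral>h. \<Phi> (k, h) \<partial>M) \<partial>M)"
    by (rule swap(1))
  also have "\<dots> = (\<integral>k. conj_mean f (x \<otimes> k \<otimes> z \<otimes> inv k) u \<partial>M)"
    by (rule Bochner_Integration.integral_cong) (simp_all add: inner space_M)
  finally show "conj_mean (conj_mean f x) z u = (\<integral>k. conj_mean f (x \<otimes> k \<otimes> z \<otimes> inv k) u \<partial>M)" .
  show "integrable M (\<lambda>k. conj_mean f (x \<otimes> k \<otimes> z \<otimes> inv k) u)"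
    using swap(2) by (rule Bochner_Integration.integrable_cong[THEN iffD1, rotated -1])
                     (simp_all add: inner space_M)
qed

lemma satisfies_5_1_conj_mean:
  assumes cont: "continuous_on (carrier G) f" and H: "satisfies_5_1 G M \<mu> \<delta> f g"
    and x: "x \<in> carrier G"
  shows "satisfies_5_1 G M \<mu> \<delta> (conj_mean f x) g"
  unfolding satisfies_5_1_iff
proof (intro ballI)
  fix z y assume z: "z \<in> carrier G" and y: "y \<in> carrier G"
  define w where "w k = x \<otimes> k \<otimes> z \<otimes> inv k" for k
  define D where "D k = conj_mean f (w k) y + \<mu> y * conj_mean f (w k) (inv y) - 2 * f (w k) * g y" for k
  have "integrable M (\<lambda>k. f (w k))"
    unfolding w_def by (rule integrable_M[OF continuous_on_conj[OF cont x z]])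
  moreover note conj_mean_conj_mean[OF cont x z y, folded w_def]
    and conj_mean_conj_mean[OF cont x z inv_closed[OF y], folded w_def]
  ultimately have "integrable M D"
    and "conj_mean (conj_mean f x) z y + \<mu> y * conj_mean (conj_mean f x) z (inv y)
           - 2 * conj_mean f x z * g y = (\<integral>k. D k \<partial>M)"
    by (simp_all add: D_def[abs_def] conj_mean_def[of f x z, folded w_def])
  moreover have "cmod (D k) \<le> \<delta>" if "k \<in> space M" for k
    using H y that by (simp add: satisfies_5_1_iff D_def w_def space_M x z)
  ultimately show "cmod (conj_mean (conj_mean f x) z y + \<mu> y * conj_mean (conj_mean f x) z (inv y)
      - 2 * conj_mean f x z * g y) \<le> \<delta>"
    by (simp add: prob_space.norm_integral_le_const[OF prob_space_M])
qed

lemma unitary_character_mult_inv: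
  assumes "unitary_character G \<mu>" "y \<in> carrier G"
  shows "\<mu> y * \<mu> (inv y) = 1"
proof -
  have mult: "\<mu> (a \<otimes> b) = \<mu> a * \<mu> b" if "a \<in> carrier G" "b \<in> carrier G" for a b
    using assms(1) that unfolding unitary_character_def by blast
  have "\<mu> \<one> \<noteq> 0"
    using assms(1) unfolding unitary_character_def by force
  moreover have "\<mu> \<one> = \<mu> \<one> * \<mu> \<one>"
    using mult[of \<one> \<one>] by simp
  ultimately have "\<mu> \<one> = 1"
    by simp
  then show ?thesis
    using mult[of y "inv y"] assms(2) by simp
qed

lemma unitary_character_conj:
  assumes "unitary_character G \<mu>" "k \<in> carrier G" "y \<in> carrier G"
  shows "\<mu> (k \<otimes> y \<otimes> inv k) = \<mu> y"
proof -
  have "\<mu> (k \<otimes> y \<otimes> inv k) = \<mu> y * (\<mu> k * \<mu> (inv k))"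
    using assms unfolding unitary_character_def by (simp add: ac_simps)
  then show ?thesis
    by (simp add: unitary_character_mult_inv[OF assms(1,2)])
qed

text \<open>Both parts below compare two instances of (5.1) whose integral terms agree; what is left
  is \<open>f x\<close> times a constant, bounded by \<open>2\<delta>\<close> for all \<open>x\<close>, so the constant vanishes.\<close>
lemma satisfies_5_1_character_symmetry:
  assumes H: "satisfies_5_1 G M \<mu> \<delta> f g" and \<mu>: "unitary_character G \<mu>"
    and unbounded: "\<not> bounded (f ` carrier G)" and y: "y \<in> carrier G"
  shows "g y = \<mu> y * g (inv y)"
proof -
  let ?a = "\<lambda>x. conj_mean f x y + \<mu> y * conj_mean f x (inv y)"
  have "2 * g y = 2 * (\<mu> y * g (inv y))"
  proof (rule eq_if_unbounded_multiplier_close[OF unbounded])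
    fix x assume x: "x \<in> carrier G"
    show "cmod (?a x - f x * (2 * g y)) \<le> \<delta>"
      using H x y by (simp add: satisfies_5_1_iff ac_simps)
    have "?a x - f x * (2 * (\<mu> y * g (inv y)))
        = \<mu> y * (conj_mean f x (inv y) + \<mu> (inv y) * conj_mean f x y - 2 * f x * g (inv y))"
      using unitary_character_mult_inv[OF \<mu> y] by (simp add: algebra_simps)
    moreover have "cmod (\<mu> y) = 1"
      using \<mu> y unfolding unitary_character_def by blast
    moreover have "cmod (conj_mean f x (inv y) + \<mu> (inv y) * conj_mean f x y - 2 * f x * g (inv y)) \<le> \<delta>"
      using bspec[OF bspec[OF H[unfolded satisfies_5_1_iff] x] inv_closed[OF y]] y by simp
    ultimately show "cmod (?a x - f x * (2 * (\<mu> y * g (inv y)))) \<le> \<delta>"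
      by (simp add: norm_mult)
  qed
  then show ?thesis by simp
qed

lemma satisfies_5_1_K_central:
  assumes cont: "continuous_on (carrier G) f" and H: "satisfies_5_1 G M \<mu> \<delta> f g"
    and \<mu>: "unitary_character G \<mu>" and unbounded: "\<not> bounded (f ` carrier G)"
  shows "K_central G K g"
proof -
  have conj: "g (k \<otimes> y \<otimes> inv k) = g y" if k: "k \<in> K" and y: "y \<in> carrier G" for k y
  proof -
    let ?a = "\<lambda>x. conj_mean f x y + \<mu> y * conj_mean f x (inv y)"
    have y': "k \<otimes> y \<otimes> inv k \<in> carrier G" and inv_y': "inv (k \<otimes> y \<otimes> inv k) = k \<otimes> inv y \<otimes> inv k"
      using k y by (simp_all add: inv_mult_group m_assoc)
    have "cmod (?a x - f x * (2 * g (k \<otimes> y \<otimes> inv k))) \<le> \<delta>" if x: "x \<in> carrier G" for x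
      using bspec[OF bspec[OF H[unfolded satisfies_5_1_iff] x] y'] k x y
      by (simp add: inv_y' conj_mean_conj_invariant[OF cont] unitary_character_conj[OF \<mu>] ac_simps)
    moreover have "cmod (?a x - f x * (2 * g y)) \<le> \<delta>" if "x \<in> carrier G" for x
      using H that y by (simp add: satisfies_5_1_iff ac_simps)
    ultimately have "2 * g (k \<otimes> y \<otimes> inv k) = 2 * g y"
      by (rule eq_if_unbounded_multiplier_close[OF unbounded])
    then show ?thesis by simp
  qed
  show ?thesis
    unfolding K_central_def
  proof (intro ballI)
    fix k x assume "k \<in> K" "x \<in> carrier G"
    then have "k \<otimes> x = k \<otimes> (x \<otimes> k) \<otimes> inv k"
      by (simp add: m_assoc)
    then show "g (k \<otimes> x) = g (x \<otimes> k)"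
      using conj \<open>k \<in> K\<close> \<open>x \<in> carrier G\<close> by simp
  qed
qed

end

theorem lemma5p1:
  fixes G :: "('a::t2_space, 'b) monoid_scheme" and K :: "'a set" and M :: "'a measure"
    and \<mu> f g :: "'a \<Rightarrow> complex" and \<delta> :: real
  assumes "lc_group G"
    and "subgroup K G" and "compact K"
    and "normalized_haar G K M"
    and "\<delta> > 0"
    and "unitary_character G \<mu>"
    and "continuous_on (carrier G) f" and "continuous_on (carrier G) g"
    and "\<not> bounded (f ` carrier G)"
    and "satisfies_5_1 G M \<mu> \<delta> f g"
  shows "(\<forall>x\<in>carrier G.
            satisfies_5_1 G M \<mu> \<delta> (\<lambda>y. \<integral>k. f (x \<otimes>\<^bsub>G\<^esub> k \<otimes>\<^bsub>G\<^esub> y \<otimes>\<^bsub>G\<^esub> inv\<^bsub>G\<^esub> k) \<partial>M) g)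
       \<and> (\<forall>y\<in>carrier G. g y = \<mu> y * g (inv\<^bsub>G\<^esub> y))
       \<and> K_central G K g"
proof -
  interpret compact_subgroup_haar G K M
    using assms(1-4)
    unfolding lc_group_def compact_subgroup_haar_def compact_subgroup_haar_axioms_def by blast
  show ?thesis
    using satisfies_5_1_conj_mean[OF assms(7,10)] satisfies_5_1_character_symmetry[OF assms(10,6,9)]
      satisfies_5_1_K_central[OF assms(7,10,6,9)]
    unfolding conj_mean_def[abs_def] by blast
qed

end
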